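(* The complex conjugation map $\mathrm{Conj}:K\to K$, $$(z_1,\dots,z_{n-1};A^{(0)},(a_0^{(1)},A^{(1)}),\dots,(a_0^{(n)},A^{(n)}))\mapsto(\bar z_1,\dots,\bar z_{n-1};\overline{A^{(0)}},(\overline{a_0^{(1)}},\overline{A^{(1)}}),\dots,(\overline{a_0^{(n)}},\overline{A^{(n)}})),$$ is a partial operad automorphism of the sphere partial operad $K$; in particular, for $P\in K(m)$, $Q\in K(n)$ and $1\le i\le m$ such that $P\,{}_i\infty_0\,Q$ exists, $\overline{P}\,{}_i\infty_0\,\overline{Q}$ exists and $\overline{P\,{}_i\infty_0\,Q}=\overline{P}\,{}_i\infty_0\,\overline{Q}$, where $\overline{R}:=\mathrm{Conj}(R)$.
   Context: Sphere partial operad $K=\{K(n)\}_{n\in\mathbb{N}}$: $K(n)$ is the moduli space of conformal equivalence classes of spheres with tubes of type $n$, i.e. Riemann spheres with one negatively oriented puncture and $n$ ordered positively oriented punctures, each equipped with a local analytic coordinate vanishing at the puncture (equivalence: biholomorphisms preserving punctures, their order and the germs of the local coordinates). For $n\ge1$ each class has a unique canonical representative: $\hat{\mathbb{C}}$ with negative puncture at $\infty$ with local coordinate $f_0(w)=-\exp\big(-\sum_{j\ge1}A^{(0)}_jw^{-j+1}\frac{d}{dw}\big)\frac1w$ (so $\lim_{w\to\infty}wf_0(w)=-1$), positive punctures $z_1,\dots,z_{n-1}\in\mathbb{C}^\times$ and $z_n=0$ (pairwise distinct), with local coordinates $f_i(w)=\exp\big(\sum_{j\ge1}A^{(i)}_jx^{j+1}\frac{d}{dx}\big)(a_0^{(i)})^{x\frac{d}{dx}}x\big|_{x=w-z_i}$,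 where $a_0^{(i)}\in\mathbb{C}^\times$ and $A^{(i)}=(A^{(i)}_j)_{j\ge1}$ are complex sequences for which these series converge near $0$; this class is denoted $(z_1,\dots,z_{n-1};A^{(0)},(a_0^{(1)},A^{(1)}),\dots,(a_0^{(n)},A^{(n)}))$ (for $n=0$ only $A^{(0)}$ with $A^{(0)}_1=0$ remains). Bars denote componentwise complex conjugation. Sewing: for $P\in K(m)$, $Q\in K(n)$, $1\le i\le m$, let $f_i$ be the local coordinate at the $i$-th positive puncture $p$ of $P$ and $g_0$ the one at the negative puncture $q$ of $Q$; if there is $r>0$ with $p$ the only puncture in $f_i^{-1}(\overline{B_r})$ and $q$ the only puncture in $g_0^{-1}(\overline{B_{1/r}})$ ($B_r$ the open disk of radius $r$ about $0$), then $P\,{}_i\infty_0\,Q\in K(m+n-1)$ is the class of the sphere obtained by removing $f_i^{-1}(B_r)$ and $g_0^{-1}(B_{1/r})$ and gluing the boundaries via $g_0^{-1}\circ J\circ f_i$, $J(w)=-1/w$, keeping $P$'s negative puncture and ordering the positive punctures as the first $i-1$ of $P$, then those of $Q$, then the remaining ones of $P$. With these partial substitution maps, the identity $(\,;\mathbf{0},(1,\mathbf{0}))\in K(1)$ and the $S_n$-actions permuting positive punctures, $K$ is a partial operad. A partial operad automorphism is a family of bijections $K(n)\to K(n)$ fixing the identity, commuting with the symmetric group actions, and compatible with sewing (whenever $P\,{}_i\infty_0\,Q$ exists, the image sewing exists and equals the image of $P\,{}_i\infty_0\,Q$). *)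

theory Defs
  imports "HOL-Analysis.Analysis"
begin

text \<open>Canonical representatives of elements of the sphere partial operad K.
  pz k : position of the k-th positive puncture (k = 1..n; pz n = 0),
  sa k : the constant a_0^(k) (k = 1..n),
  sA k : the sequence A^(k) (k = 0..n; index j >= 1).
  Unused entries are normalised to 0, so that equal classes = equal records.\<close>

record sphere =
  pz :: "nat \<Rightarrow> complex"
  sa :: "nat \<Rightarrow> complex"
  sA :: "nat \<Rightarrow> nat \<Rightarrow> complex"

text \<open>Coefficients of T^k x, where T = sum_{j>=1} A_j x^(j+1) d/dx, as a formal power series.\<close>
fun iterT :: "(nat \<Rightarrow> complex) \<Rightarrow> nat \<Rightarrow> nat \<Rightarrow> complex" where
  "iterT A 0 = (\<lambda>l. if l = 1 then 1 else 0)"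
| "iterT A (Suc k) = (\<lambda>l. \<Sum>j = 1..<l. A j * of_nat (l - j) * iterT A k (l - j))"

text \<open>Coefficients of exp(T) x (T^k x has order >= k+1, so the sum is finite).\<close>
definition expcoef :: "(nat \<Rightarrow> complex) \<Rightarrow> nat \<Rightarrow> complex" where
  "expcoef A l = (\<Sum>k\<le>l. iterT A k l / of_nat (fact k))"

definition ser :: "(nat \<Rightarrow> complex) \<Rightarrow> complex \<Rightarrow> complex" where
  "ser A x = (\<Sum>l. expcoef A l * x ^ l)"

text \<open>Local coordinates of the canonical representative:
  f_0(w) = - exp(T_A0) x at x = 1/w  (equivalently -exp(-sum A_j w^(-j+1) d/dw)(1/w)),
  f_k(w) = a_0^(k) exp(T_Ak) x at x = w - z_k.\<close>
definition loc :: "sphere \<Rightarrow> nat \<Rightarrow> complex \<Rightarrow> complex" where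
  "loc P k w = (if k = 0 then - ser (sA P 0) (inverse w)
                else sa P k * ser (sA P k) (w - pz P k))"

definition K :: "nat \<Rightarrow> sphere set" where
  "K n = {P.
     (\<forall>k. (k = 0 \<or> n \<le> k) \<longrightarrow> pz P k = 0) \<and>
     (\<forall>k\<in>{1..<n}. pz P k \<noteq> 0) \<and>
     (\<forall>j\<in>{1..<n}. \<forall>k\<in>{1..<n}. j \<noteq> k \<longrightarrow> pz P j \<noteq> pz P k) \<and>
     (\<forall>k\<in>{1..n}. sa P k \<noteq> 0) \<and>
     (\<forall>k. (k = 0 \<or> n < k) \<longrightarrow> sa P k = 0) \<and>
     (\<forall>k. sA P k 0 = 0) \<and>
     (\<forall>k. n < k \<longrightarrow> sA P k = (\<lambda>_. 0)) \<and>
     (\<forall>k\<le>n. conv_radius (expcoef (sA P k)) > 0) \<and>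
     (n = 0 \<longrightarrow> sA P 0 1 = 0)}"

definition sph_id :: sphere where
  "sph_id = \<lparr>pz = (\<lambda>_. 0), sa = (\<lambda>k. if k = 1 then 1 else 0), sA = (\<lambda>_ _. 0)\<rparr>"

definition sconj :: "sphere \<Rightarrow> sphere" where
  "sconj P = \<lparr>pz = (\<lambda>k. cnj (pz P k)), sa = (\<lambda>k. cnj (sa P k)),
              sA = (\<lambda>k j. cnj (sA P k j))\<rparr>"

definition perm_act :: "nat \<Rightarrow> (nat \<Rightarrow> nat) \<Rightarrow> sphere \<Rightarrow> sphere \<Rightarrow> bool" where
  "perm_act n \<sigma> P Q \<longleftrightarrow> P \<in> K n \<and> Q \<in> K n \<and>
     (\<exists>\<psi>. bij \<psi> \<and> \<psi> holomorphic_on UNIV \<and>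
        (\<forall>\<^sub>F w in at_infinity. loc Q 0 (\<psi> w) = loc P 0 w) \<and>
        (\<forall>k\<in>{1..n}. \<psi> (pz P (\<sigma> k)) = pz Q k \<and>
           (\<forall>\<^sub>F w in nhds (pz P (\<sigma> k)). loc Q k (\<psi> w) = loc P (\<sigma> k) w)))"

text \<open>Sewing data with radius r: psiP is the (unique) holomorphic continuation of the inverse
  of f_i to a neighbourhood of the closed disk of radius r, so that f_i^{-1}(closed B_r) is
  psiP ` cball 0 r; psiQ is the continuation of the inverse of g_0 to a neighbourhood of the
  closed disk of radius 1/r, written in the coordinate u = 1/w at infinity.\<close>
definition sew_data ::
  "nat \<Rightarrow> nat \<Rightarrow> sphere \<Rightarrow> nat \<Rightarrow> sphere \<Rightarrow> real \<Rightarrow> (complex \<Rightarrow> complex) \<Rightarrow> (complex \<Rightarrow> complex) \<Rightarrow> bool"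
where
  "sew_data m n P i Q r psiP psiQ \<longleftrightarrow> r > 0 \<and>
     (\<exists>e>0. psiP holomorphic_on ball 0 (r + e) \<and> inj_on psiP (ball 0 (r + e))) \<and>
     psiP 0 = pz P i \<and> (\<forall>\<^sub>F z in nhds 0. loc P i (psiP z) = z) \<and>
     (\<forall>k\<in>{1..m}. k \<noteq> i \<longrightarrow> pz P k \<notin> psiP ` cball 0 r) \<and>
     (\<exists>e>0. psiQ holomorphic_on ball 0 (inverse r + e) \<and> inj_on psiQ (ball 0 (inverse r + e))) \<and>
     psiQ 0 = 0 \<and> (\<forall>\<^sub>F z in nhds 0. - ser (sA Q 0) (psiQ z) = z) \<and>
     (\<forall>k\<in>{1..<n}. inverse (pz Q k) \<notin> psiQ ` cball 0 (inverse r))"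

definition sewable :: "nat \<Rightarrow> nat \<Rightarrow> sphere \<Rightarrow> nat \<Rightarrow> sphere \<Rightarrow> bool" where
  "sewable m n P i Q \<longleftrightarrow> (\<exists>r psiP psiQ. sew_data m n P i Q r psiP psiQ)"

text \<open>R = P i-infinity-0 Q: the glued sphere is conformally equivalent to R, i.e. there are
  maps F (on the part of P kept, minus its negative puncture at infinity) and G (on the part
  of Q kept), continuous, injective, holomorphic in the interiors, agreeing along the seam,
  jointly bijective onto C (with infinity going to infinity), and carrying punctures
  (in the prescribed order) and germs of local coordinates of P, Q to those of R.\<close>
definition sew :: "nat \<Rightarrow> nat \<Rightarrow> sphere \<Rightarrow> nat \<Rightarrow> sphere \<Rightarrow> sphere \<Rightarrow> bool" where
  "sew m n P i Q R \<longleftrightarrow> R \<in> K (m + n - 1) \<and>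
     (\<exists>r psiP psiQ F G. sew_data m n P i Q r psiP psiQ \<and>
       (let DP = {w. w \<notin> psiP ` ball 0 r};
            DQ = {w. w = 0 \<or> inverse w \<notin> psiQ ` ball 0 (inverse r)} in
        continuous_on DP F \<and> F holomorphic_on interior DP \<and> inj_on F DP \<and>
        continuous_on DQ G \<and> G holomorphic_on interior DQ \<and> inj_on G DQ \<and>
        (\<forall>z. norm z = r \<longrightarrow> F (psiP z) = G (inverse (psiQ (- inverse z)))) \<and>
        F ` DP \<union> G ` DQ = UNIV \<and>
        F ` interior DP \<inter> G ` DQ = {} \<and> F ` DP \<inter> G ` interior DQ = {} \<and>
        filterlim F at_infinity at_infinity \<and>
        (\<forall>\<^sub>F w in at_infinity. loc R 0 (F w) = loc P 0 w) \<and>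
        (\<forall>k\<in>{1..<i}. F (pz P k) = pz R k \<and>
            (\<forall>\<^sub>F w in nhds (pz P k). loc R k (F w) = loc P k w)) \<and>
        (\<forall>k\<in>{1..n}. G (pz Q k) = pz R (i - 1 + k) \<and>
            (\<forall>\<^sub>F w in nhds (pz Q k). loc R (i - 1 + k) (G w) = loc Q k w)) \<and>
        (\<forall>k\<in>{i<..m}. F (pz P k) = pz R (k + n - 1) \<and>
            (\<forall>\<^sub>F w in nhds (pz P k). loc R (k + n - 1) (F w) = loc P k w))))"

end

theory Submission
  imports Defs
begin

text \<open>Complex conjugation is an antiholomorphic involution of the Riemann sphere fixing 0 and
  infinity; conjugating a map f means passing to cnj \<circ> f \<circ> cnj. The coefficients of exp(T) x
  are polynomials with rational coefficients in the sequence A, so conjugating the data of a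
  canonical representative conjugates each of its local coordinates, at least inside the disc
  of convergence of the defining series. Conjugation also preserves holomorphy, injectivity,
  discs about 0 and limits at infinity, so conjugating the maps that witness a permutation or a
  sewing for P, Q, R yields witnesses of the same kind for their conjugates.\<close>

section \<open>Conjugating maps, germs and filters\<close>

lemma filtermap_cnj_nhds: "filtermap cnj (nhds a) = nhds (cnj a)"
proof (rule filtermap_fun_inverse[where g = cnj])
  have "(cnj \<longlongrightarrow> cnj b) (nhds b)" for b
    using tendsto_cnj[OF filterlim_ident] .
  from this[of a] this[of "cnj a"]
  show "filterlim cnj (nhds a) (nhds (cnj a))" and "filterlim cnj (nhds (cnj a)) (nhds a)"
    by simp_all
qed simp

lemma filterlim_cnj_at_infinity: "filterlim cnj at_infinity at_infinity"
  using filterlim_norm_at_top by (simp add: filterlim_at_infinity_conv_norm_at_top)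

lemma filtermap_cnj_at_infinity: "filtermap cnj at_infinity = at_infinity"
  by (rule filtermap_fun_inverse[OF filterlim_cnj_at_infinity filterlim_cnj_at_infinity]) simp

lemma eventually_compose_cnj_cnj_eq:
  assumes f: "filterlim f G F"
    and eq: "\<forall>\<^sub>F w in F. g (f w) = h w"
    and g: "\<forall>\<^sub>F u in G. g' (cnj u) = cnj (g u)"
    and h: "\<forall>\<^sub>F w in F. h' (cnj w) = cnj (h w)"
  shows "\<forall>\<^sub>F w in filtermap cnj F. g' ((cnj \<circ> f \<circ> cnj) w) = h' w"
proof -
  from g f have "\<forall>\<^sub>F w in F. g' (cnj (f w)) = cnj (g (f w))"
    by (rule eventually_compose_filterlim)
  with eq h show ?thesis
    unfolding eventually_filtermap by eventually_elim simp
qed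

lemma eventually_right_inverse_compose_cnj_cnj:
  assumes "isCont \<psi> 0" and "\<forall>\<^sub>F z in nhds 0. g (\<psi> z) = z"
    and "\<forall>\<^sub>F u in nhds (\<psi> 0). g' (cnj u) = cnj (g u)"
  shows "\<forall>\<^sub>F z in nhds 0. g' ((cnj \<circ> \<psi> \<circ> cnj) z) = z"
  using eventually_compose_cnj_cnj_eq[where h' = "\<lambda>z. z",
      OF isCont_tendsto_compose[OF assms(1) filterlim_ident] assms(2,3)]
  by (simp add: filtermap_cnj_nhds)

lemma image_compose_cnj_cnj: "(cnj \<circ> f \<circ> cnj) ` S = cnj ` f ` cnj ` S"
  by (simp add: image_comp)

lemma cnj_image_cnj_image [simp]: "cnj ` cnj ` S = S"
  by (simp add: image_image)

lemma cnj_image_ball [simp]: "cnj ` ball 0 r = ball 0 r" "cnj ` cball 0 r = cball 0 r"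
  by (auto simp: in_image_cnj_iff)

lemma interior_cnj_image: "interior (cnj ` S) = cnj ` interior S"
  by (rule interior_injective_linear_image) (auto simp: linear_cnj inj_on_def)

lemma continuous_on_compose_cnj_cnj:
  assumes "continuous_on S f"
  shows "continuous_on (cnj ` S) (cnj \<circ> f \<circ> cnj)"
proof -
  have cnj: "continuous_on T cnj" for T :: "complex set"
    using continuous_on_cnj[OF continuous_on_id] .
  have "continuous_on (cnj ` S) (f \<circ> cnj)"
    using continuous_on_compose[OF cnj, of "cnj ` S" f] assms by simp
  from continuous_on_compose[OF this cnj] show ?thesis
    by (simp add: o_assoc)
qed

lemma holomorphic_on_interior_compose_cnj_cnj:
  "f holomorphic_on interior S \<Longrightarrow> (cnj \<circ> f \<circ> cnj) holomorphic_on interior (cnj ` S)"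
  using holomorphic_on_compose_cnj_cnj[of f "interior (cnj ` S)"] open_interior[of "cnj ` S"]
  by (simp add: interior_cnj_image)

lemma inj_on_compose_cnj_cnj: "inj_on f S \<Longrightarrow> inj_on (cnj \<circ> f \<circ> cnj) (cnj ` S)"
  by (auto simp: inj_on_def)

lemma bij_cnj: "bij cnj"
  by (rule o_bij[of cnj]) (simp_all add: fun_eq_iff)

lemma bij_compose_cnj_cnj: "bij f \<Longrightarrow> bij (cnj \<circ> f \<circ> cnj)"
  by (intro bij_comp bij_cnj)

lemma filterlim_compose_cnj_cnj_at_infinity:
  "filterlim f at_infinity at_infinity \<Longrightarrow> filterlim (cnj \<circ> f \<circ> cnj) at_infinity at_infinity"
  unfolding comp_def
  by (rule filterlim_compose[OF filterlim_cnj_at_infinity filterlim_compose[OF _ filterlim_cnj_at_infinity]])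

lemma filterlim_at_infinity_bij_continuous:
  fixes f :: "'a::euclidean_space \<Rightarrow> 'a"
  assumes "bij f" "continuous_on UNIV f"
  shows "filterlim f at_infinity at_infinity"
proof -
  obtain g where "homeomorphism UNIV UNIV f g"
    using invariance_of_domain_homeomorphism[of UNIV f] assms by (auto simp: bij_def)
  then have g: "continuous_on UNIV g" "\<And>x. g (f x) = x"
    unfolding homeomorphism_def by auto
  show ?thesis
    unfolding filterlim_at_infinity[OF order.refl]
  proof (intro allI impI)
    fix r :: real
    have "bounded (g ` cball 0 r)"
      by (intro compact_imp_bounded compact_continuous_image continuous_on_subset[OF g(1)]) auto
    then obtain M where M: "\<forall>y\<in>cball 0 r. norm (g y) \<le> M"
      by (auto simp: bounded_iff)
    have "r \<le> norm (f x)" if "M < norm x" for x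
    proof (rule ccontr)
      assume "\<not> r \<le> norm (f x)"
      then have "norm (g (f x)) \<le> M"
        using M by simp
      with g(2) that show False by simp
    qed
    then show "\<forall>\<^sub>F x in at_infinity. r \<le> norm (f x)"
      unfolding eventually_at_infinity by (intro exI[of _ "M + 1"]) auto
  qed
qed

lemma mem_interior_if_eventually_nhds:
  assumes "\<forall>\<^sub>F y in nhds x. y \<in> S"
  shows "x \<in> interior S"
proof -
  from assms obtain T where "open T" "x \<in> T" "\<forall>y\<in>T. y \<in> S"
    unfolding eventually_nhds by blast
  then show ?thesis
    by (intro interiorI[of T]) auto
qed

lemma compact_image_cball:
  fixes a :: "'a::heine_borel"
  assumes "continuous_on (ball a s) f" "\<rho> < s"
  shows "compact (f ` cball a \<rho>)"
proof (rule compact_continuous_image)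
  show "continuous_on (cball a \<rho>) f"
    by (rule continuous_on_subset[OF assms(1)]) (use assms(2) in \<open>auto simp: subset_iff\<close>)
qed simp

lemma eventually_nhds_zero_or_inverse_notin:
  fixes C :: "complex set"
  assumes "compact C" and "a = 0 \<or> inverse a \<notin> C"
  shows "\<forall>\<^sub>F w in nhds a. w = 0 \<or> inverse w \<notin> C"
proof (cases "a = 0")
  case True
  obtain M where M: "\<forall>x\<in>C. norm x \<le> M"
    using compact_imp_bounded[OF assms(1)] by (auto simp: bounded_iff)
  have "filterlim (\<lambda>w. norm (inverse w)) at_top (at (0::complex))"
    using filterlim_inverse_at_infinity by (simp add: filterlim_at_infinity_conv_norm_at_top)
  then have "\<forall>\<^sub>F w in at 0. M < norm (inverse w :: complex)"
    by (rule eventually_compose_filterlim[OF eventually_gt_at_top])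
  then have "\<forall>\<^sub>F w in at 0. inverse w \<notin> C"
    by (rule eventually_mono) (metis M not_le)
  then have "\<forall>\<^sub>F w in nhds 0. w \<noteq> 0 \<longrightarrow> inverse w \<notin> C"
    by (simp add: eventually_at_filter)
  then show ?thesis
    unfolding True by (rule eventually_mono) blast
next
  case False
  have "((\<lambda>w. inverse w) \<longlongrightarrow> inverse a) (nhds a)"
    using False by (rule tendsto_inverse[OF filterlim_ident])
  moreover have "open (- C)"
    using assms(1) by (simp add: compact_imp_closed open_Compl)
  ultimately have "\<forall>\<^sub>F w in nhds a. inverse w \<in> - C"
    using False assms(2) by (intro topological_tendstoD) auto
  then show ?thesis
    by (rule eventually_mono) blast
qed

section \<open>Conjugating canonical representatives\<close>

lemma iterT_cnj: "iterT (\<lambda>j. cnj (A j)) k l = cnj (iterT A k l)"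
  by (induction k arbitrary: l) auto

lemma expcoef_cnj: "expcoef (\<lambda>j. cnj (A j)) l = cnj (expcoef A l)"
  by (simp add: expcoef_def iterT_cnj)

lemma conv_radius_expcoef_cnj: "conv_radius (expcoef (\<lambda>j. cnj (A j))) = conv_radius (expcoef A)"
  by (rule conv_radius_cong) (simp add: expcoef_cnj)

lemma ser_cnj:
  assumes "norm x < conv_radius (expcoef A)"
  shows "ser (\<lambda>j. cnj (A j)) (cnj x) = cnj (ser A x)"
proof -
  have "(\<lambda>l. expcoef A l * x ^ l) sums ser A x"
    unfolding ser_def using summable_in_conv_radius[OF assms] by (rule summable_sums)
  then have "(\<lambda>l. cnj (expcoef A l * x ^ l)) sums cnj (ser A x)"
    by (simp only: sums_cnj)
  then have "(\<lambda>l. expcoef (\<lambda>j. cnj (A j)) l * cnj x ^ l) sums cnj (ser A x)"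
    by (simp add: expcoef_cnj)
  then show ?thesis
    unfolding ser_def by (rule sums_unique[symmetric])
qed

text \<open>Off the disc of convergence ser is a junk value, so conjugation commutes with it only
  near the centre; this is why all identities between local coordinates below are germs.\<close>

lemma eventually_ser_cnj:
  assumes "conv_radius (expcoef A) > 0"
  shows "\<forall>\<^sub>F x in nhds 0. ser (\<lambda>j. cnj (A j)) (cnj x) = cnj (ser A x)"
proof -
  obtain e where e: "0 < ereal e" "ereal e < conv_radius (expcoef A)"
    using ereal_dense2[OF assms] by blast
  have "\<forall>\<^sub>F x in nhds 0. x \<in> ball 0 e"
    using e(1) by (intro eventually_nhds_in_open) auto
  then show ?thesis
  proof eventually_elim
    case (elim x)
    then have "ereal (norm x) < ereal e" by simp
    also have "\<dots> < conv_radius (expcoef A)" by (fact e(2))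
    finally show ?case by (rule ser_cnj)
  qed
qed

lemma sconj_simps [simp]:
  "pz (sconj P) k = cnj (pz P k)"
  "sa (sconj P) k = cnj (sa P k)"
  "sA (sconj P) k = (\<lambda>j. cnj (sA P k j))"
  by (simp_all add: sconj_def)

lemma sconj_sconj [simp]: "sconj (sconj P) = P"
  by (simp add: sconj_def)

lemma sconj_in_K: "P \<in> K n \<Longrightarrow> sconj P \<in> K n"
  unfolding K_def by (auto simp: conv_radius_expcoef_cnj fun_eq_iff)

lemma bij_betw_sconj_K: "bij_betw sconj (K n) (K n)"
  by (rule bij_betw_byWitness[where f' = sconj]) (auto simp: sconj_in_K)

lemma conv_radius_expcoef_K_pos: "P \<in> K n \<Longrightarrow> k \<le> n \<Longrightarrow> conv_radius (expcoef (sA P k)) > 0"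
  unfolding K_def by blast

lemma eventually_loc_sconj_puncture:
  assumes "P \<in> K n" "k \<in> {1..n}"
  shows "\<forall>\<^sub>F w in nhds (pz P k). loc (sconj P) k (cnj w) = cnj (loc P k w)"
proof -
  have "((\<lambda>w. w - pz P k) \<longlongrightarrow> 0) (nhds (pz P k))"
    using tendsto_diff[OF filterlim_ident tendsto_const, of "pz P k" "pz P k"] by simp
  with eventually_ser_cnj[OF conv_radius_expcoef_K_pos[OF assms(1)]] assms(2)
  have "\<forall>\<^sub>F w in nhds (pz P k).
          ser (\<lambda>j. cnj (sA P k j)) (cnj (w - pz P k)) = cnj (ser (sA P k) (w - pz P k))"
    by (intro eventually_compose_filterlim[where f = "\<lambda>w. w - pz P k"]) auto
  then show ?thesis
    using assms(2) by (auto simp: loc_def elim!: eventually_mono)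
qed

lemma eventually_loc_sconj_at_infinity:
  assumes "P \<in> K n"
  shows "\<forall>\<^sub>F w in at_infinity. loc (sconj P) 0 (cnj w) = cnj (loc P 0 w)"
proof -
  from eventually_ser_cnj[OF conv_radius_expcoef_K_pos[OF assms zero_le]] tendsto_inverse_0
  have "\<forall>\<^sub>F w in at_infinity. ser (\<lambda>j. cnj (sA P 0 j)) (cnj (inverse w)) = cnj (ser (sA P 0) (inverse w))"
    by (rule eventually_compose_filterlim)
  then show ?thesis
    by (auto simp: loc_def elim!: eventually_mono)
qed

definition carries_puncture :: "(complex \<Rightarrow> complex) \<Rightarrow> sphere \<Rightarrow> nat \<Rightarrow> sphere \<Rightarrow> nat \<Rightarrow> bool"
  where "carries_puncture f P k R j \<longleftrightarrow>
    f (pz P k) = pz R j \<and> (\<forall>\<^sub>F w in nhds (pz P k). loc R j (f w) = loc P k w)"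

lemma carries_puncture_sconj:
  assumes P: "P \<in> K m" "k \<in> {1..m}" and R: "R \<in> K N" "j \<in> {1..N}"
    and f: "isCont f (pz P k)" and carries: "carries_puncture f P k R j"
  shows "carries_puncture (cnj \<circ> f \<circ> cnj) (sconj P) k (sconj R) j"
proof -
  from carries have fk: "f (pz P k) = pz R j"
    and eq: "\<forall>\<^sub>F w in nhds (pz P k). loc R j (f w) = loc P k w"
    unfolding carries_puncture_def by auto
  have "filterlim f (nhds (pz R j)) (nhds (pz P k))"
    using isCont_tendsto_compose[OF f filterlim_ident] fk by simp
  from eventually_compose_cnj_cnj_eq[OF this eq eventually_loc_sconj_puncture[OF R]
      eventually_loc_sconj_puncture[OF P]]
  have "\<forall>\<^sub>F w in nhds (cnj (pz P k)). loc (sconj R) j ((cnj \<circ> f \<circ> cnj) w) = loc (sconj P) k w"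
    by (simp add: filtermap_cnj_nhds)
  with fk show ?thesis
    unfolding carries_puncture_def by simp
qed

lemma infinity_germ_sconj:
  assumes "P \<in> K m" "R \<in> K N" "filterlim f at_infinity at_infinity"
    and "\<forall>\<^sub>F w in at_infinity. loc R 0 (f w) = loc P 0 w"
  shows "\<forall>\<^sub>F w in at_infinity. loc (sconj R) 0 ((cnj \<circ> f \<circ> cnj) w) = loc (sconj P) 0 w"
  using eventually_compose_cnj_cnj_eq[OF assms(3,4) eventually_loc_sconj_at_infinity[OF assms(2)]
      eventually_loc_sconj_at_infinity[OF assms(1)]]
  by (simp add: filtermap_cnj_at_infinity)

lemma perm_act_sconj:
  assumes \<sigma>: "\<sigma> permutes {1..n}" and act: "perm_act n \<sigma> P Q"
  shows "perm_act n \<sigma> (sconj P) (sconj Q)"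
proof -
  obtain \<psi> where PK: "P \<in> K n" and QK: "Q \<in> K n" and bij: "bij \<psi>" and holo: "\<psi> holomorphic_on UNIV"
    and inf: "\<forall>\<^sub>F w in at_infinity. loc Q 0 (\<psi> w) = loc P 0 w"
    and punct: "\<And>k. k \<in> {1..n} \<Longrightarrow> carries_puncture \<psi> P (\<sigma> k) Q k"
    using act unfolding perm_act_def carries_puncture_def by blast
  have cont: "continuous_on UNIV \<psi>"
    using holo by (rule holomorphic_on_imp_continuous_on)
  have "(cnj \<circ> \<psi> \<circ> cnj) holomorphic_on UNIV"
    using holo by (intro holomorphic_on_compose_cnj_cnj) (simp_all add: image_cnj_conv_vimage_cnj)
  moreover have "\<forall>\<^sub>F w in at_infinity. loc (sconj Q) 0 ((cnj \<circ> \<psi> \<circ> cnj) w) = loc (sconj P) 0 w"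
    \<comment> \<open>\<psi> must be proper, so that \<psi> w lies in the disc of convergence of the coordinate at infinity\<close>
    using PK QK filterlim_at_infinity_bij_continuous[OF bij cont] inf by (rule infinity_germ_sconj)
  moreover have "carries_puncture (cnj \<circ> \<psi> \<circ> cnj) (sconj P) (\<sigma> k) (sconj Q) k"
    if k: "k \<in> {1..n}" for k
  proof (rule carries_puncture_sconj[OF PK _ QK k _ punct[OF k]])
    show "\<sigma> k \<in> {1..n}"
      using permutes_in_image[OF \<sigma>] k by simp
    show "isCont \<psi> (pz P (\<sigma> k))"
      using cont by (simp add: continuous_on_eq_continuous_at)
  qed
  ultimately show ?thesis
    using PK QK bij unfolding perm_act_def carries_puncture_def
    by (blast intro: sconj_in_K bij_compose_cnj_cnj)
qed

section \<open>Sewing\<close>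

lemma sew_data_pz_P_interior:
  assumes sd: "sew_data m n P i Q r psiP psiQ" and k: "k \<in> {1..m}" "k \<noteq> i"
  shows "pz P k \<in> interior {w. w \<notin> psiP ` ball 0 r}"
proof (rule mem_interior_if_eventually_nhds)
  obtain e where "e > 0" and holo: "psiP holomorphic_on ball 0 (r + e)"
    and notin: "pz P k \<notin> psiP ` cball 0 r"
    using sd k unfolding sew_data_def by blast
  have "closed (psiP ` cball 0 r)"
    using compact_image_cball[OF holomorphic_on_imp_continuous_on[OF holo]] \<open>e > 0\<close>
    by (simp add: compact_imp_closed)
  then have "\<forall>\<^sub>F w in nhds (pz P k). w \<in> - psiP ` cball 0 r"
    using notin by (intro eventually_nhds_in_open) (simp_all add: open_Compl)
  then show "\<forall>\<^sub>F w in nhds (pz P k). w \<in> {w. w \<notin> psiP ` ball 0 r}"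
    by (rule eventually_mono) auto
qed

lemma sew_data_pz_Q_interior:
  assumes sd: "sew_data m n P i Q r psiP psiQ" and QK: "Q \<in> K n" and k: "k \<in> {1..n}"
  shows "pz Q k \<in> interior {w. w = 0 \<or> inverse w \<notin> psiQ ` ball 0 (inverse r)}"
proof (rule mem_interior_if_eventually_nhds)
  obtain e where "e > 0" and holo: "psiQ holomorphic_on ball 0 (inverse r + e)"
    and notin: "\<forall>k\<in>{1..<n}. inverse (pz Q k) \<notin> psiQ ` cball 0 (inverse r)"
    using sd unfolding sew_data_def by blast
  have "compact (psiQ ` cball 0 (inverse r))"
    using compact_image_cball[OF holomorphic_on_imp_continuous_on[OF holo]] \<open>e > 0\<close> by simp
  moreover have "pz Q k = 0 \<or> inverse (pz Q k) \<notin> psiQ ` cball 0 (inverse r)"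
    using QK k notin by (cases "k = n") (simp_all add: K_def)
  ultimately have "\<forall>\<^sub>F w in nhds (pz Q k). w = 0 \<or> inverse w \<notin> psiQ ` cball 0 (inverse r)"
    by (rule eventually_nhds_zero_or_inverse_notin)
  then show "\<forall>\<^sub>F w in nhds (pz Q k). w \<in> {w. w = 0 \<or> inverse w \<notin> psiQ ` ball 0 (inverse r)}"
    by (rule eventually_mono) auto
qed

lemma sew_data_sconj:
  assumes PK: "P \<in> K m" and QK: "Q \<in> K n" and i: "i \<in> {1..m}"
    and sd: "sew_data m n P i Q r psiP psiQ"
  shows "sew_data m n (sconj P) i (sconj Q) r (cnj \<circ> psiP \<circ> cnj) (cnj \<circ> psiQ \<circ> cnj)"
proof -
  obtain eP eQ where r: "r > 0"
    and P_disk: "eP > 0" "psiP holomorphic_on ball 0 (r + eP)" "inj_on psiP (ball 0 (r + eP))"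
    and P_center: "psiP 0 = pz P i" and P_inv: "\<forall>\<^sub>F z in nhds 0. loc P i (psiP z) = z"
    and P_punct: "\<forall>k\<in>{1..m}. k \<noteq> i \<longrightarrow> pz P k \<notin> psiP ` cball 0 r"
    and Q_disk: "eQ > 0" "psiQ holomorphic_on ball 0 (inverse r + eQ)"
      "inj_on psiQ (ball 0 (inverse r + eQ))"
    and Q_center: "psiQ 0 = 0" and Q_inv: "\<forall>\<^sub>F z in nhds 0. - ser (sA Q 0) (psiQ z) = z"
    and Q_punct: "\<forall>k\<in>{1..<n}. inverse (pz Q k) \<notin> psiQ ` cball 0 (inverse r)"
    using sd unfolding sew_data_def by blast
  have "isCont psiP 0"
    using holomorphic_on_imp_continuous_on[OF P_disk(2)]
    by (rule continuous_on_interior) (use r P_disk(1) in simp)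
  then have P_inv': "\<forall>\<^sub>F z in nhds 0. loc (sconj P) i ((cnj \<circ> psiP \<circ> cnj) z) = z"
    by (rule eventually_right_inverse_compose_cnj_cnj[where g = "loc P i", OF _ P_inv])
      (use eventually_loc_sconj_puncture[OF PK i] P_center in simp)
  have "isCont psiQ 0"
    using holomorphic_on_imp_continuous_on[OF Q_disk(2)]
    by (rule continuous_on_interior) (use r Q_disk(1) in \<open>simp add: add_pos_pos\<close>)
  then have Q_inv': "\<forall>\<^sub>F z in nhds 0. - ser (sA (sconj Q) 0) ((cnj \<circ> psiQ \<circ> cnj) z) = z"
    by (rule eventually_right_inverse_compose_cnj_cnj[where g = "\<lambda>u. - ser (sA Q 0) u", OF _ Q_inv])
      (use eventually_ser_cnj[OF conv_radius_expcoef_K_pos[OF QK zero_le]] Q_center in simp)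
  have P_disk': "\<exists>e>0. (cnj \<circ> psiP \<circ> cnj) holomorphic_on ball 0 (r + e) \<and>
      inj_on (cnj \<circ> psiP \<circ> cnj) (ball 0 (r + e))"
    using P_disk holomorphic_on_compose_cnj_cnj[of psiP "ball 0 (r + eP)"]
      inj_on_compose_cnj_cnj[of psiP "ball 0 (r + eP)"]
    by auto
  have Q_disk': "\<exists>e>0. (cnj \<circ> psiQ \<circ> cnj) holomorphic_on ball 0 (inverse r + e) \<and>
      inj_on (cnj \<circ> psiQ \<circ> cnj) (ball 0 (inverse r + e))"
    using Q_disk holomorphic_on_compose_cnj_cnj[of psiQ "ball 0 (inverse r + eQ)"]
      inj_on_compose_cnj_cnj[of psiQ "ball 0 (inverse r + eQ)"]
    by auto
  have P_punct': "\<forall>k\<in>{1..m}. k \<noteq> i \<longrightarrow> pz (sconj P) k \<notin> (cnj \<circ> psiP \<circ> cnj) ` cball 0 r"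
    and Q_punct': "\<forall>k\<in>{1..<n}. inverse (pz (sconj Q) k) \<notin> (cnj \<circ> psiQ \<circ> cnj) ` cball 0 (inverse r)"
    unfolding image_compose_cnj_cnj using P_punct Q_punct by (simp_all add: in_image_cnj_iff)
  show ?thesis
    unfolding sew_data_def
    using r P_disk' P_center P_inv' P_punct' Q_disk' Q_center Q_inv' Q_punct' by simp
qed

lemma sewE:
  assumes "sew m n P i Q R"
  obtains r psiP psiQ F G DP DQ where
    "R \<in> K (m + n - 1)" "sew_data m n P i Q r psiP psiQ"
    "DP = {w. w \<notin> psiP ` ball 0 r}"
    "DQ = {w. w = 0 \<or> inverse w \<notin> psiQ ` ball 0 (inverse r)}"
    "continuous_on DP F" "F holomorphic_on interior DP" "inj_on F DP"
    "continuous_on DQ G" "G holomorphic_on interior DQ" "inj_on G DQ"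
    "\<forall>z. norm z = r \<longrightarrow> F (psiP z) = G (inverse (psiQ (- inverse z)))"
    "F ` DP \<union> G ` DQ = UNIV"
    "F ` interior DP \<inter> G ` DQ = {}" "F ` DP \<inter> G ` interior DQ = {}"
    "filterlim F at_infinity at_infinity"
    "\<forall>\<^sub>F w in at_infinity. loc R 0 (F w) = loc P 0 w"
    "\<forall>k\<in>{1..<i}. carries_puncture F P k R k"
    "\<forall>k\<in>{1..n}. carries_puncture G Q k R (i - 1 + k)"
    "\<forall>k\<in>{i<..m}. carries_puncture F P k R (k + n - 1)"
  using assms unfolding sew_def Let_def
  by (elim conjE exE) (rule that[unfolded carries_puncture_def, OF _ _ refl refl], assumption+)

lemma sewI:
  assumes
    "R \<in> K (m + n - 1)" "sew_data m n P i Q r psiP psiQ"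
    "DP = {w. w \<notin> psiP ` ball 0 r}"
    "DQ = {w. w = 0 \<or> inverse w \<notin> psiQ ` ball 0 (inverse r)}"
    "continuous_on DP F" "F holomorphic_on interior DP" "inj_on F DP"
    "continuous_on DQ G" "G holomorphic_on interior DQ" "inj_on G DQ"
    "\<forall>z. norm z = r \<longrightarrow> F (psiP z) = G (inverse (psiQ (- inverse z)))"
    "F ` DP \<union> G ` DQ = UNIV"
    "F ` interior DP \<inter> G ` DQ = {}" "F ` DP \<inter> G ` interior DQ = {}"
    "filterlim F at_infinity at_infinity"
    "\<forall>\<^sub>F w in at_infinity. loc R 0 (F w) = loc P 0 w"
    "\<forall>k\<in>{1..<i}. carries_puncture F P k R k"
    "\<forall>k\<in>{1..n}. carries_puncture G Q k R (i - 1 + k)"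
    "\<forall>k\<in>{i<..m}. carries_puncture F P k R (k + n - 1)"
  shows "sew m n P i Q R"
  unfolding sew_def Let_def
  apply (rule conjI[OF assms(1)])
  apply (rule exI[of _ r], rule exI[of _ psiP], rule exI[of _ psiQ], rule exI[of _ F], rule exI[of _ G])
  unfolding assms(3,4)[symmetric]
  using assms(2,5-16) assms(17-19)[unfolded carries_puncture_def]
  by (intro conjI) assumption+

lemma sew_sconj:
  assumes PK: "P \<in> K m" and QK: "Q \<in> K n" and i: "i \<in> {1..m}" and sw: "sew m n P i Q R"
  shows "sew m n (sconj P) i (sconj Q) (sconj R)"
proof -
  from sw obtain r psiP psiQ F G DP DQ where RK: "R \<in> K (m + n - 1)"
    and sd: "sew_data m n P i Q r psiP psiQ"
    and DP: "DP = {w. w \<notin> psiP ` ball 0 r}"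
    and DQ: "DQ = {w. w = 0 \<or> inverse w \<notin> psiQ ` ball 0 (inverse r)}"
    and cont_F: "continuous_on DP F" and holo_F: "F holomorphic_on interior DP"
    and inj_F: "inj_on F DP"
    and cont_G: "continuous_on DQ G" and holo_G: "G holomorphic_on interior DQ"
    and inj_G: "inj_on G DQ"
    and seam: "\<forall>z. norm z = r \<longrightarrow> F (psiP z) = G (inverse (psiQ (- inverse z)))"
    and cover: "F ` DP \<union> G ` DQ = UNIV"
    and disj_F: "F ` interior DP \<inter> G ` DQ = {}" and disj_G: "F ` DP \<inter> G ` interior DQ = {}"
    and F_inf: "filterlim F at_infinity at_infinity"
    and germ_inf: "\<forall>\<^sub>F w in at_infinity. loc R 0 (F w) = loc P 0 w"
    and germ_before: "\<forall>k\<in>{1..<i}. carries_puncture F P k R k"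
    and germ_Q: "\<forall>k\<in>{1..n}. carries_puncture G Q k R (i - 1 + k)"
    and germ_after: "\<forall>k\<in>{i<..m}. carries_puncture F P k R (k + n - 1)"
    by (rule sewE)
  let ?F = "cnj \<circ> F \<circ> cnj" and ?G = "cnj \<circ> G \<circ> cnj"
  have DP': "cnj ` DP = {w. w \<notin> (cnj \<circ> psiP \<circ> cnj) ` ball 0 r}"
    and DQ': "cnj ` DQ = {w. w = 0 \<or> inverse w \<notin> (cnj \<circ> psiQ \<circ> cnj) ` ball 0 (inverse r)}"
    unfolding DP DQ image_compose_cnj_cnj by (auto simp: in_image_cnj_iff)
  have seam': "\<forall>z. norm z = r \<longrightarrow>
      ?F ((cnj \<circ> psiP \<circ> cnj) z) = ?G (inverse ((cnj \<circ> psiQ \<circ> cnj) (- inverse z)))"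
    using seam by simp
  have "?F ` cnj ` DP \<union> ?G ` cnj ` DQ = cnj ` (F ` DP \<union> G ` DQ)"
    unfolding image_compose_cnj_cnj by (simp add: image_Un)
  then have cover': "?F ` cnj ` DP \<union> ?G ` cnj ` DQ = UNIV"
    using cover by (simp add: bij_is_surj[OF bij_cnj])
  have disj_F': "?F ` interior (cnj ` DP) \<inter> ?G ` cnj ` DQ = {}"
    and disj_G': "?F ` cnj ` DP \<inter> ?G ` interior (cnj ` DQ) = {}"
    unfolding image_compose_cnj_cnj interior_cnj_image using disj_F disj_G
    by (simp_all flip: image_Int[OF bij_is_inj[OF bij_cnj]])
  have isCont_F: "isCont F (pz P k)" if "k \<in> {1..m}" "k \<noteq> i" for k
    using continuous_on_interior[OF holomorphic_on_imp_continuous_on[OF holo_F]]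
      sew_data_pz_P_interior[OF sd that] by (simp add: DP)
  have isCont_G: "isCont G (pz Q k)" if "k \<in> {1..n}" for k
    using continuous_on_interior[OF holomorphic_on_imp_continuous_on[OF holo_G]]
      sew_data_pz_Q_interior[OF sd QK that] by (simp add: DQ)
  have germ_before': "\<forall>k\<in>{1..<i}. carries_puncture ?F (sconj P) k (sconj R) k"
    using germ_before i by (auto intro!: carries_puncture_sconj[OF PK _ RK] isCont_F)
  have germ_Q': "\<forall>k\<in>{1..n}. carries_puncture ?G (sconj Q) k (sconj R) (i - 1 + k)"
    using germ_Q i by (auto intro!: carries_puncture_sconj[OF QK _ RK] isCont_G)
  have germ_after': "\<forall>k\<in>{i<..m}. carries_puncture ?F (sconj P) k (sconj R) (k + n - 1)"
    using germ_after i by (auto intro!: carries_puncture_sconj[OF PK _ RK] isCont_F)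
  show ?thesis
    using sconj_in_K[OF RK] sew_data_sconj[OF PK QK i sd] DP' DQ'
      continuous_on_compose_cnj_cnj[OF cont_F] holomorphic_on_interior_compose_cnj_cnj[OF holo_F]
      inj_on_compose_cnj_cnj[OF inj_F]
      continuous_on_compose_cnj_cnj[OF cont_G] holomorphic_on_interior_compose_cnj_cnj[OF holo_G]
      inj_on_compose_cnj_cnj[OF inj_G]
      seam' cover' disj_F' disj_G' filterlim_compose_cnj_cnj_at_infinity[OF F_inf]
      infinity_germ_sconj[OF PK RK F_inf germ_inf] germ_before' germ_Q' germ_after'
    by (rule sewI)
qed

theorem proposition2p15:
  shows "(\<forall>n. bij_betw sconj (K n) (K n)) \<and>
         sconj sph_id = sph_id \<and>
         (\<forall>n \<sigma> P Q. \<sigma> permutes {1..n} \<longrightarrow> perm_act n \<sigma> P Q \<longrightarrow>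
             perm_act n \<sigma> (sconj P) (sconj Q)) \<and>
         (\<forall>m n i P Q. P \<in> K m \<longrightarrow> Q \<in> K n \<longrightarrow> 1 \<le> i \<longrightarrow> i \<le> m \<longrightarrow>
             sewable m n P i Q \<longrightarrow>
               sewable m n (sconj P) i (sconj Q) \<and>
               (\<forall>R. sew m n P i Q R \<longrightarrow> sew m n (sconj P) i (sconj Q) (sconj R)))"
proof (intro conjI allI impI)
  fix n
  show "bij_betw sconj (K n) (K n)"
    by (rule bij_betw_sconj_K)
next
  show "sconj sph_id = sph_id"
    by (simp add: sconj_def sph_id_def fun_eq_iff)
next
  fix n \<sigma> P Q
  assume "\<sigma> permutes {1..n}" "perm_act n \<sigma> P Q"
  then show "perm_act n \<sigma> (sconj P) (sconj Q)"
    by (rule perm_act_sconj)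
next
  fix m n i P Q
  assume "P \<in> K m" "Q \<in> K n" "1 \<le> i" "i \<le> m" "sewable m n P i Q"
  then show "sewable m n (sconj P) i (sconj Q)"
    unfolding sewable_def by (meson atLeastAtMost_iff sew_data_sconj)
next
  fix m n i P Q R
  assume "P \<in> K m" "Q \<in> K n" "1 \<le> i" "i \<le> m" "sew m n P i Q R"
  then show "sew m n (sconj P) i (sconj Q) (sconj R)"
    by (intro sew_sconj) simp_all
qed

end
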